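(* Let $B_{z,z'}:\Lambda\to\Lambda$ be the linear operator defined on the basis of Schur functions by $$B_{z,z'}s_\mu=-|\mu|(|\mu|-1+zz')s_\mu+p_1\sum_{\mu_\bullet\nearrow\mu}(z)_{\mu/\mu_\bullet}(z')_{\mu/\mu_\bullet}s_{\mu_\bullet}.$$ Then $B_{z,z'}$ preserves the principal ideal of $\Lambda$ generated by $p_1-1$, and the induced operator on $\Lambda^\circ=\Lambda/(p_1-1)$ is given by $s^\circ_\mu\mapsto-m(m-1+zz')s^\circ_\mu+\sum_{\mu_\bullet\nearrow\mu}(z)_{\mu/\mu_\bullet}(z')_{\mu/\mu_\bullet}s^\circ_{\mu_\bullet}$, $m=|\mu|$.
   Context: $\Lambda=\mathbb R[p_1,p_2,\dots]$ is the algebra of symmetric functions over $\mathbb R$ with power sums $p_k$ and Schur functions $s_\mu$ indexed by Young diagrams $\mu$ (including $\varnothing$); $\Lambda^\circ=\Lambda/(p_1-1)$ and $f^\circ$ denotes the image of $f$. $\mu_\bullet\nearrow\mu$ means $\mu_\bullet\subset\mu$ with $|\mu|=|\mu_\bullet|+1$; $(z)_\theta=\prod_{(i,j)\in\theta}(z+j-i)$ for a skew diagram $\theta$ ($(i,j)$ = row $i$, column $j$). $(z,z')$ is fixed in the principal series ($z\notin\mathbb R$, $z'=\bar z$) or complementary series ($z,z'\in(N,N+1)$, $N\in\mathbb Z$), so the coefficients are real. *)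

theory Defs
  imports Complex_Main "HOL-Library.Poly_Mapping" "HOL-Combinatorics.Permutations"
begin

text \<open>The algebra of symmetric functions Lambda = R[p_1,p_2,...], realised as the polynomial
ring over the reals in countably many variables; the variable with index i stands for p_(i+1).\<close>
type_synonym sym = "(nat \<Rightarrow>\<^sub>0 nat) \<Rightarrow>\<^sub>0 real"

definition pvar :: "nat \<Rightarrow> sym" where
  "pvar i = Poly_Mapping.single (Poly_Mapping.single i 1) 1"

definition psum :: "nat \<Rightarrow> sym" where
  "psum k = pvar (k - 1)"

definition cst :: "real \<Rightarrow> sym" where
  "cst c = Poly_Mapping.single 0 c"

text \<open>complete homogeneous symmetric functions via Newton's identities:
  h_0 = 1, n h_n = sum_(k=1..n) p_k h_(n-k)\<close>
fun hsym :: "nat \<Rightarrow> sym" where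
  "hsym n = (if n = 0 then 1
             else cst (1 / real n) * (\<Sum>k\<in>{1..n}. psum k * hsym (n - k)))"

definition hsym_int :: "int \<Rightarrow> sym" where
  "hsym_int k = (if k < 0 then 0 else hsym (nat k))"

definition detn :: "nat \<Rightarrow> (nat \<Rightarrow> nat \<Rightarrow> 'a::comm_ring_1) \<Rightarrow> 'a" where
  "detn n M = (\<Sum>\<sigma>\<in>{\<sigma>. \<sigma> permutes {0..<n}}. of_int (sign \<sigma>) * (\<Prod>i<n. M i (\<sigma> i)))"

definition young :: "nat list \<Rightarrow> bool" where
  "young mu \<longleftrightarrow> sorted_wrt (\<ge>) mu \<and> 0 \<notin> set mu"

definition ysize :: "nat list \<Rightarrow> nat" where
  "ysize mu = sum_list mu"

text \<open>cells (i,j) = (row, column), 1-based\<close>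
definition cells :: "nat list \<Rightarrow> (nat \<times> nat) set" where
  "cells mu = {(i, j). 1 \<le> i \<and> i \<le> length mu \<and> 1 \<le> j \<and> j \<le> mu ! (i - 1)}"

definition yprec :: "nat list \<Rightarrow> nat list \<Rightarrow> bool" where
  "yprec nu mu \<longleftrightarrow> young nu \<and> cells nu \<subseteq> cells mu \<and> ysize mu = ysize nu + 1"

text \<open>Schur function via the Jacobi-Trudi identity s_mu = det[h_(mu_i - i + j)]\<close>
definition schur :: "nat list \<Rightarrow> sym" where
  "schur mu = detn (length mu) (\<lambda>i j. hsym_int (int (mu ! i) - int i + int j))"

definition poch :: "complex \<Rightarrow> (nat \<times> nat) set \<Rightarrow> complex" where
  "poch z \<theta> = (\<Prod>(i, j)\<in>\<theta>. z + of_int (int j - int i))"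

text \<open>admissible parameters: principal or complementary series\<close>
definition admissible :: "complex \<Rightarrow> complex \<Rightarrow> bool" where
  "admissible z z' \<longleftrightarrow>
     (z \<notin> \<real> \<and> z' = cnj z) \<or>
     (\<exists>N::int. z \<in> \<real> \<and> z' \<in> \<real> \<and> of_int N < Re z \<and> Re z < of_int N + 1
                  \<and> of_int N < Re z' \<and> Re z' < of_int N + 1)"

definition coef :: "complex \<Rightarrow> complex \<Rightarrow> nat list \<Rightarrow> nat list \<Rightarrow> real" where
  "coef z z' mu nu = Re (poch z (cells mu - cells nu) * poch z' (cells mu - cells nu))"

text \<open>right-hand side of the defining formula of B_(z,z') on s_mu, with p_1 replaced by q
  (q = p_1 gives B s_mu, q = 1 gives the formula in the quotient)\<close>
definition Bformula :: "complex \<Rightarrow> complex \<Rightarrow> sym \<Rightarrow> nat list \<Rightarrow> sym" where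
  "Bformula z z' q mu =
     cst (- real (ysize mu) * (real (ysize mu) - 1 + Re (z * z'))) * schur mu
     + q * (\<Sum>nu\<in>{nu. yprec nu mu}. cst (coef z z' mu nu) * schur nu)"

definition real_linear :: "(sym \<Rightarrow> sym) \<Rightarrow> bool" where
  "real_linear B \<longleftrightarrow> (\<forall>f g. B (f + g) = B f + B g) \<and> (\<forall>c f. B (cst c * f) = cst c * B f)"

definition in_ideal :: "sym \<Rightarrow> bool" where
  "in_ideal f \<longleftrightarrow> (\<exists>g. f = (psum 1 - 1) * g)"

end

theory Submission
  imports Defs "Jordan_Normal_Form.Determinant" "HOL-Library.Multiset"
begin

text \<open>The operator \<open>B\<close> commutes with multiplication by \<open>p_1\<close>. On a Schur function this follows
  from the Pieri rule \<open>p_1 s_mu = \<Sum> s_(mu + \<box>)\<close>: both \<open>B (p_1 s_mu)\<close> and \<open>p_1 B s_mu\<close> are sums over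
  the diagrams reached from \<open>mu\<close> by adding one box and removing one. The terms that do not return to
  \<open>mu\<close> agree, and the diagonal terms cancel against the change of the eigenvalue
  \<open>-m (m - 1 + z z')\<close> by the content identity
  \<open>\<Sum>\<^sub>a\<^sub>d\<^sub>d (z + c)(z' + c) - \<Sum>\<^sub>r\<^sub>e\<^sub>m (z + c)(z' + c) = z z' + 2 |mu|\<close>.
  The Schur functions span \<open>\<Lambda>\<close>: Newton's identities express every \<open>p_k\<close> through the \<open>h_n\<close>, and
  the Jacobi-Trudi expansion of \<open>s_lam\<close> is \<open>h_lam\<close> plus products \<open>h_u\<close> whose parts have a larger
  sum of squares. Hence \<open>B (p_1 g) = p_1 B g\<close> for all \<open>g\<close>, so \<open>B ((p_1 - 1) g) = (p_1 - 1) B g\<close>.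
  The formula in the quotient is immediate, as the two formulas differ by \<open>(p_1 - 1)\<close> times the
  sum over \<open>mu\<^sub>\<bullet> \<nearrow> mu\<close>.\<close>

lemma cst_0 [simp]: "cst 0 = 0" by (simp add: cst_def)
lemma cst_1 [simp]: "cst 1 = 1" by (simp add: cst_def)
lemma cst_add: "cst (a + b) = cst a + cst b" by (simp add: cst_def single_add)
lemma cst_diff: "cst (a - b) = cst a - cst b" by (simp add: cst_def single_diff)
lemma cst_uminus: "cst (- a) = - cst a" by (simp add: cst_def single_uminus)
lemma cst_mult: "cst (a * b) = cst a * cst b" by (simp add: cst_def mult_single)
lemma cst_of_int: "cst (of_int k) = of_int k" by (simp add: cst_def)
lemma cst_of_nat: "cst (of_nat k) = of_nat k" by (simp add: cst_def)

lemma cst_sum: "cst (sum g A) = (\<Sum>x\<in>A. cst (g x))"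
  by (induction A rule: infinite_finite_induct) (auto simp: cst_add)

inductive_set real_span :: "sym set \<Rightarrow> sym set" for S where
  zero [intro]: "0 \<in> real_span S"
| smult_gen: "x \<in> S \<Longrightarrow> cst c * x \<in> real_span S"
| add [intro]: "a \<in> real_span S \<Longrightarrow> b \<in> real_span S \<Longrightarrow> a + b \<in> real_span S"

lemma real_span_superset: "x \<in> S \<Longrightarrow> x \<in> real_span S"
  using real_span.smult_gen[of x S 1] by simp

lemma real_span_smult: "a \<in> real_span S \<Longrightarrow> cst c * a \<in> real_span S"
proof (induction rule: real_span.induct)
  case (smult_gen x d)
  then show ?case
    using real_span.smult_gen[of x S "c * d"] by (simp add: cst_mult mult.assoc)
qed (auto simp: distrib_left)

lemma real_span_diff: "a \<in> real_span S \<Longrightarrow> b \<in> real_span S \<Longrightarrow> a - b \<in> real_span S"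
  using real_span.add[of a S "cst (-1) * b"] real_span_smult[of b S "-1"] by (simp add: cst_uminus)

lemma real_span_of_int: "a \<in> real_span S \<Longrightarrow> of_int k * a \<in> real_span S"
  using real_span_smult[of a S "of_int k"] by (simp add: cst_of_int)

lemma real_span_of_nat: "a \<in> real_span S \<Longrightarrow> of_nat k * a \<in> real_span S"
  using real_span_smult[of a S "of_nat k"] by (simp add: cst_of_nat)

lemma real_span_sum: "(\<And>x. x \<in> A \<Longrightarrow> f x \<in> real_span S) \<Longrightarrow> sum f A \<in> real_span S"
  by (induction A rule: infinite_finite_induct) auto

lemma real_span_subset: "S \<subseteq> real_span T \<Longrightarrow> real_span S \<subseteq> real_span T"
proof
  fix a assume "S \<subseteq> real_span T" "a \<in> real_span S"
  then show "a \<in> real_span T"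
    by (induction rule: real_span.induct[OF \<open>a \<in> real_span S\<close>]) (auto intro: real_span_smult)
qed

lemma real_span_mult:
  assumes mult_closed: "\<And>x y. x \<in> S \<Longrightarrow> y \<in> S \<Longrightarrow> x * y \<in> S"
    and "a \<in> real_span S" "b \<in> real_span S"
  shows "a * b \<in> real_span S"
  using assms(2)
proof (induction rule: real_span.induct)
  case (smult_gen x c)
  from assms(3) have "x * b \<in> real_span S"
  proof (induction rule: real_span.induct)
    case (smult_gen y d)
    have "x * (cst d * y) = cst d * (x * y)" by (simp add: algebra_simps)
    then show ?case using real_span.smult_gen mult_closed smult_gen \<open>x \<in> S\<close> by metis
  qed (auto simp: distrib_left)
  then show ?case using real_span_smult[of "x * b" S c] by (simp add: mult.assoc)
qed (auto simp: distrib_right)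

lemma real_linear_zero: "real_linear B \<Longrightarrow> B 0 = 0"
  unfolding real_linear_def by (metis add_cancel_right_right add_0)

lemma real_linear_add: "real_linear B \<Longrightarrow> B (f + g) = B f + B g"
  unfolding real_linear_def by blast

lemma real_linear_smult: "real_linear B \<Longrightarrow> B (cst c * f) = cst c * B f"
  unfolding real_linear_def by blast

lemma real_linear_sum: "real_linear B \<Longrightarrow> B (sum g A) = (\<Sum>x\<in>A. B (g x))"
  by (induction A rule: infinite_finite_induct) (auto simp: real_linear_zero real_linear_add)

lemma real_linear_eq_on_span:
  assumes "real_linear F" "real_linear G" "\<And>x. x \<in> S \<Longrightarrow> F x = G x" "a \<in> real_span S"
  shows "F a = G a"
  using assms(4)
  by (induction rule: real_span.induct)
     (simp_all add: assms real_linear_zero real_linear_add real_linear_smult)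

lemma real_linear_mult_left:
  assumes "real_linear B"
  shows "real_linear (\<lambda>f. q * B f)" "real_linear (\<lambda>f. B (q * f))"
proof -
  have "B (q * (cst c * f)) = cst c * B (q * f)" for c f
    using real_linear_smult[OF assms, of c "q * f"] by (simp add: algebra_simps)
  then show "real_linear (\<lambda>f. B (q * f))"
    using assms by (simp add: real_linear_def algebra_simps)
  show "real_linear (\<lambda>f. q * B f)"
    using assms by (simp add: real_linear_def algebra_simps)
qed

section \<open>Products of complete symmetric functions span \<open>\<Lambda>\<close>\<close>

declare hsym.simps[simp del]

lemma newton_identity:
  assumes "n \<noteq> 0"
  shows "(\<Sum>k\<in>{1..n}. psum k * hsym (n - k)) = of_nat n * hsym n"
proof -
  have "of_nat n * hsym n = (cst (real n) * cst (1 / real n)) * (\<Sum>k\<in>{1..n}. psum k * hsym (n - k))"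
    using assms by (subst hsym.simps) (simp add: cst_of_nat[symmetric] mult.assoc)
  also have "cst (real n) * cst (1 / real n) = 1"
    using assms by (simp add: cst_mult[symmetric])
  finally show ?thesis by simp
qed

lemma hsym_0 [simp]: "hsym 0 = 1"
  by (simp add: hsym.simps)

lemma hsym_1: "hsym 1 = psum 1"
  using newton_identity[of 1] by simp

definition hprod :: "nat list \<Rightarrow> sym" where
  "hprod v = prod_list (map hsym v)"

lemma hprod_append: "hprod (v @ w) = hprod v * hprod w"
  by (simp add: hprod_def)

lemma real_span_hprod_mult:
  "a \<in> real_span (range hprod) \<Longrightarrow> b \<in> real_span (range hprod) \<Longrightarrow> a * b \<in> real_span (range hprod)"
  by (rule real_span_mult) (auto simp: hprod_append[symmetric])

lemma hsym_in_real_span_hprod: "hsym n \<in> real_span (range hprod)"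
  by (rule real_span_superset) (simp add: image_iff hprod_def exI[of _ "[n]"])

lemma one_in_real_span_hprod: "1 \<in> real_span (range hprod)"
  by (rule real_span_superset) (simp add: image_iff hprod_def exI[of _ "[]"])

lemma psum_in_real_span_hprod: "n \<noteq> 0 \<Longrightarrow> psum n \<in> real_span (range hprod)"
proof (induction n rule: less_induct)
  case (less n)
  have "{1..n} = insert n {1..<n}" using less.prems by auto
  then have "psum n = of_nat n * hsym n - (\<Sum>k\<in>{1..<n}. psum k * hsym (n - k))"
    using newton_identity[OF less.prems] by (simp add: algebra_simps)
  also have "\<dots> \<in> real_span (range hprod)"
    by (intro real_span_diff real_span_of_nat hsym_in_real_span_hprod real_span_sum
        real_span_hprod_mult less.IH) auto
  finally show ?case .
qed

lemma single_sum_eq_prod_single: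
  "finite A \<Longrightarrow> Poly_Mapping.single (sum g A) (1::'b::comm_semiring_1) = (\<Prod>x\<in>A. Poly_Mapping.single (g x) 1)"
proof (induction A rule: finite_induct)
  case (insert x F)
  then show ?case by (simp add: mult_single flip: insert.IH)
qed simp

lemma pvar_power: "pvar i ^ k = Poly_Mapping.single (Poly_Mapping.single i k) 1"
proof (induction k)
  case (Suc k)
  have "Poly_Mapping.single (Poly_Mapping.single i (Suc k)) (1::real)
      = Poly_Mapping.single (Poly_Mapping.single i 1) 1 * Poly_Mapping.single (Poly_Mapping.single i k) 1"
    by (simp add: mult_single flip: single_add)
  with Suc show ?case by (simp add: pvar_def)
qed simp

lemma monomial_eq_prod_pvar:
  "Poly_Mapping.single m 1 = (\<Prod>i\<in>Poly_Mapping.keys m. pvar i ^ Poly_Mapping.lookup m i)"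
proof -
  have "m = (\<Sum>i\<in>Poly_Mapping.keys m. Poly_Mapping.single i (Poly_Mapping.lookup m i))"
    by (rule poly_mapping_eqI) (auto simp: lookup_sum lookup_single when_def in_keys_iff)
  then have "Poly_Mapping.single m (1::real)
      = Poly_Mapping.single (\<Sum>i\<in>Poly_Mapping.keys m. Poly_Mapping.single i (Poly_Mapping.lookup m i)) 1"
    by simp
  also have "\<dots> = (\<Prod>i\<in>Poly_Mapping.keys m. pvar i ^ Poly_Mapping.lookup m i)"
    by (simp add: single_sum_eq_prod_single pvar_power)
  finally show ?thesis .
qed

lemma real_span_hprod_UNIV: "real_span (range hprod) = UNIV"
proof -
  have prod_in: "prod F A \<in> real_span (range hprod)"
    if "\<And>x. F x \<in> real_span (range hprod)" for F :: "nat \<Rightarrow> sym" and A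
    using that by (induction A rule: infinite_finite_induct)
                  (auto intro: one_in_real_span_hprod real_span_hprod_mult)
  have pvar_pow: "pvar i ^ k \<in> real_span (range hprod)" for i k
    using psum_in_real_span_hprod[of "Suc i"]
    by (induction k) (auto simp: psum_def intro: one_in_real_span_hprod real_span_hprod_mult)
  have monomial: "Poly_Mapping.single m 1 \<in> real_span (range hprod)" for m
    unfolding monomial_eq_prod_pvar by (intro prod_in pvar_pow)
  have "f \<in> real_span (range hprod)" for f :: sym
  proof -
    have "f = (\<Sum>m\<in>Poly_Mapping.keys f. cst (Poly_Mapping.lookup f m) * Poly_Mapping.single m 1)"
      by (rule poly_mapping_eqI)
         (auto simp: cst_def mult_single lookup_sum lookup_single when_def in_keys_iff)
    also have "\<dots> \<in> real_span (range hprod)"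
      by (intro real_span_sum real_span_smult monomial)
    finally show ?thesis .
  qed
  then show ?thesis by blast
qed

section \<open>Adding and removing boxes\<close>

text \<open>Rows are indexed from \<open>0\<close> here, whereas \<open>cells\<close> numbers them from \<open>1\<close>; \<open>rowlen\<close> pads with
  zeros, and \<open>add_box mu (length mu)\<close> opens a new row. A removable row of length \<open>1\<close> is the last
  row, which is why \<open>remove_box\<close> may drop it with \<open>butlast\<close>.\<close>

definition rowlen :: "nat list \<Rightarrow> nat \<Rightarrow> nat" where
  "rowlen mu i = (if i < length mu then mu ! i else 0)"

definition add_box :: "nat list \<Rightarrow> nat \<Rightarrow> nat list" where
  "add_box mu k = (if k < length mu then mu[k := mu ! k + 1] else mu @ [1])"

definition remove_box :: "nat list \<Rightarrow> nat \<Rightarrow> nat list" where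
  "remove_box mu j = (if mu ! j = 1 then butlast mu else mu[j := mu ! j - 1])"

definition addable :: "nat list \<Rightarrow> nat \<Rightarrow> bool" where
  "addable mu k \<longleftrightarrow> k = 0 \<or> rowlen mu k < rowlen mu (k - 1)"

definition removable :: "nat list \<Rightarrow> nat \<Rightarrow> bool" where
  "removable mu j \<longleftrightarrow> rowlen mu (Suc j) < rowlen mu j"

definition addable_rows :: "nat list \<Rightarrow> nat set" where
  "addable_rows mu = {k. addable mu k}"

definition removable_rows :: "nat list \<Rightarrow> nat set" where
  "removable_rows mu = {j. removable mu j}"

lemma rowlen_beyond: "length mu \<le> i \<Longrightarrow> rowlen mu i = 0"
  by (simp add: rowlen_def)

lemma young_iff_rowlen:
  "young mu \<longleftrightarrow> (\<forall>i. rowlen mu (Suc i) \<le> rowlen mu i) \<and> (\<forall>i<length mu. 0 < rowlen mu i)"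
proof
  assume "young mu"
  then show "(\<forall>i. rowlen mu (Suc i) \<le> rowlen mu i) \<and> (\<forall>i<length mu. 0 < rowlen mu i)"
    by (auto simp: young_def rowlen_def sorted_wrt_iff_nth_less in_set_conv_nth)
next
  assume rows: "(\<forall>i. rowlen mu (Suc i) \<le> rowlen mu i) \<and> (\<forall>i<length mu. 0 < rowlen mu i)"
  then have antimono: "rowlen mu j \<le> rowlen mu i" if "i \<le> j" for i j
    using lift_Suc_antimono_le[of "rowlen mu"] that by blast
  have "sorted_wrt (\<ge>) mu"
    unfolding sorted_wrt_iff_nth_less
  proof (intro allI impI)
    fix i j assume "i < j" "j < length mu"
    then show "mu ! j \<le> mu ! i" using antimono[of i j] by (simp add: rowlen_def)
  qed
  moreover have "0 \<notin> set mu"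
    using rows by (auto simp: rowlen_def in_set_conv_nth)
  ultimately show "young mu" by (simp add: young_def)
qed

lemma young_rowlen_Suc_le: "young mu \<Longrightarrow> rowlen mu (Suc i) \<le> rowlen mu i"
  by (simp add: young_iff_rowlen)

lemma young_rowlen_antimono: "young mu \<Longrightarrow> i \<le> j \<Longrightarrow> rowlen mu j \<le> rowlen mu i"
  using lift_Suc_antimono_le[of "rowlen mu"] young_rowlen_Suc_le by blast

lemma young_rowlen_pos_iff: "young mu \<Longrightarrow> 0 < rowlen mu i \<longleftrightarrow> i < length mu"
  by (cases "i < length mu") (auto simp: young_iff_rowlen rowlen_beyond)

lemma young_eqI:
  assumes "young mu" "young nu" "\<And>i. rowlen mu i = rowlen nu i"
  shows "mu = nu"
proof -
  have "i < length mu \<longleftrightarrow> i < length nu" for i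
    using young_rowlen_pos_iff[OF assms(1)] young_rowlen_pos_iff[OF assms(2)] assms(3) by simp
  then have len: "length mu = length nu"
    by (meson linorder_neqE_nat less_irrefl)
  show ?thesis
  proof (rule nth_equalityI)
    fix i assume "i < length mu"
    then show "mu ! i = nu ! i" using assms(3)[of i] len by (simp add: rowlen_def)
  qed fact
qed

lemma ysize_eq_sum_rowlen: "length mu \<le> N \<Longrightarrow> ysize mu = (\<Sum>i<N. rowlen mu i)"
proof -
  assume N: "length mu \<le> N"
  have "ysize mu = (\<Sum>i<length mu. rowlen mu i)"
    by (simp add: ysize_def sum_list_sum_nth atLeast0LessThan rowlen_def)
  also have "\<dots> = (\<Sum>i<N. rowlen mu i)"
    by (rule sum.mono_neutral_left) (use N in \<open>auto simp: rowlen_def\<close>)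
  finally show ?thesis .
qed

lemma cells_rowlen: "cells mu = {(i, j). 1 \<le> i \<and> 1 \<le> j \<and> j \<le> rowlen mu (i - 1)}"
  by (auto simp: cells_def rowlen_def split: if_splits)

lemma cells_subset_iff: "cells nu \<subseteq> cells mu \<longleftrightarrow> (\<forall>i. rowlen nu i \<le> rowlen mu i)"
proof
  assume sub: "cells nu \<subseteq> cells mu"
  show "\<forall>i. rowlen nu i \<le> rowlen mu i"
  proof
    fix i
    show "rowlen nu i \<le> rowlen mu i"
      using subsetD[OF sub, of "(Suc i, rowlen nu i)"] by (cases "rowlen nu i = 0") (auto simp: cells_rowlen)
  qed
qed (auto simp: cells_rowlen intro: order.trans)

lemma addable_le_length: "addable mu k \<Longrightarrow> k \<le> length mu"
  by (auto simp: addable_def rowlen_def split: if_splits)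

lemma removable_less_length: "removable mu j \<Longrightarrow> j < length mu"
  by (auto simp: removable_def rowlen_def split: if_splits)

lemma finite_addable_rows: "finite (addable_rows mu)"
  by (rule finite_subset[of _ "{..length mu}"]) (auto simp: addable_rows_def addable_le_length)

lemma finite_removable_rows: "finite (removable_rows mu)"
  by (rule finite_subset[of _ "{..<length mu}"]) (auto simp: removable_rows_def removable_less_length)

lemma rowlen_add_box:
  "k \<le> length mu \<Longrightarrow> rowlen (add_box mu k) i = rowlen mu i + (if i = k then 1 else 0)"
  by (auto simp: rowlen_def add_box_def nth_append)

lemma length_add_box:
  "k \<le> length mu \<Longrightarrow> length (add_box mu k) = (if k < length mu then length mu else Suc (length mu))"
  by (auto simp: add_box_def)

lemma young_add_box:
  assumes "young mu" "addable mu k"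
  shows "young (add_box mu k)"
proof -
  have k: "k \<le> length mu" using addable_le_length assms(2) .
  show ?thesis unfolding young_iff_rowlen
  proof safe
    fix i
    show "rowlen (add_box mu k) (Suc i) \<le> rowlen (add_box mu k) i"
      using assms young_rowlen_Suc_le[OF assms(1), of i] k by (auto simp: rowlen_add_box addable_def)
  next
    fix i assume "i < length (add_box mu k)"
    then show "0 < rowlen (add_box mu k) i"
      using k young_rowlen_pos_iff[OF assms(1), of i]
      by (auto simp: rowlen_add_box[OF k] length_add_box[OF k] split: if_splits)
  qed
qed

lemma rowlen_remove_box:
  assumes "young mu" "removable mu j"
  shows "rowlen (remove_box mu j) i = rowlen mu i - (if i = j then 1 else 0)"
proof (cases "mu ! j = 1")
  case True
  have j: "j < length mu" using removable_less_length assms(2) .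
  with True assms have "rowlen mu (Suc j) = 0" by (simp add: removable_def rowlen_def)
  then have "Suc j = length mu" using young_rowlen_pos_iff[OF assms(1), of "Suc j"] j by simp
  then show ?thesis using True by (auto simp: remove_box_def rowlen_def nth_butlast)
qed (auto simp: remove_box_def rowlen_def)

lemma length_remove_box: "length (remove_box mu j) \<le> length mu"
  by (auto simp: remove_box_def)

lemma young_remove_box:
  assumes "young mu" "removable mu j"
  shows "young (remove_box mu j)"
  unfolding young_iff_rowlen
proof safe
  fix i
  show "rowlen (remove_box mu j) (Suc i) \<le> rowlen (remove_box mu j) i"
    using young_rowlen_Suc_le[OF assms(1), of i] assms(2)
    unfolding removable_def rowlen_remove_box[OF assms] by auto
next
  fix i assume i: "i < length (remove_box mu j)"
  have "j < length mu" using removable_less_length assms(2) .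
  with i show "0 < rowlen (remove_box mu j) i"
    using young_rowlen_pos_iff[OF assms(1), of i]
    by (auto simp: remove_box_def rowlen_def nth_butlast nth_list_update split: if_splits)
qed

lemma ysize_remove_box:
  assumes "young mu" "removable mu j"
  shows "ysize mu = Suc (ysize (remove_box mu j))"
proof -
  have j: "j < length mu" and pos: "0 < rowlen mu j"
    using assms(2) by (auto simp: removable_less_length removable_def)
  have "(\<Sum>i<length mu. rowlen mu i)
      = (\<Sum>i<length mu. rowlen mu i - (if i = j then 1 else 0)) + (\<Sum>i<length mu. if i = j then 1 else 0)"
    by (subst sum.distrib[symmetric]) (rule sum.cong, use pos in auto)
  then show ?thesis
    using j ysize_eq_sum_rowlen[OF order.refl, of mu]
      ysize_eq_sum_rowlen[OF length_remove_box, of mu j] by (simp add: rowlen_remove_box[OF assms])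
qed

lemma remove_add_box:
  assumes "young mu" "addable mu k"
  shows "removable (add_box mu k) k" "remove_box (add_box mu k) k = mu"
proof -
  have k: "k \<le> length mu" using addable_le_length[OF assms(2)] .
  show rem: "removable (add_box mu k) k"
    using young_rowlen_Suc_le[OF assms(1), of k] by (simp add: removable_def rowlen_add_box[OF k])
  show "remove_box (add_box mu k) k = mu"
    by (rule young_eqI[OF young_remove_box[OF young_add_box[OF assms] rem] assms(1)])
       (simp add: rowlen_remove_box[OF young_add_box[OF assms] rem] rowlen_add_box[OF k])
qed

lemma add_remove_box:
  assumes "young mu" "removable mu j"
  shows "addable (remove_box mu j) j" "add_box (remove_box mu j) j = mu"
proof -
  have pos: "0 < rowlen mu j" using assms(2) by (simp add: removable_def)
  show add: "addable (remove_box mu j) j"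
    using pos young_rowlen_antimono[OF assms(1), of "j - 1" j]
    by (auto simp: addable_def rowlen_remove_box[OF assms])
  have "j \<le> length (remove_box mu j)" using addable_le_length[OF add] .
  then show "add_box (remove_box mu j) j = mu"
    by (intro young_eqI[OF young_add_box[OF young_remove_box[OF assms] add] assms(1)])
       (use pos in \<open>simp add: rowlen_remove_box[OF assms] rowlen_add_box\<close>)
qed

lemma ysize_add_box: "young mu \<Longrightarrow> addable mu k \<Longrightarrow> ysize (add_box mu k) = Suc (ysize mu)"
  using ysize_remove_box[OF young_add_box remove_add_box(1)] remove_add_box(2) by metis

lemma yprec_remove_box: "young mu \<Longrightarrow> removable mu j \<Longrightarrow> yprec (remove_box mu j) mu"
  by (simp add: yprec_def young_remove_box ysize_remove_box cells_subset_iff rowlen_remove_box)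

lemma yprec_imp_remove_box:
  assumes "young mu" "yprec nu mu"
  obtains j where "removable mu j" "nu = remove_box mu j"
proof -
  have nu: "young nu" and le: "\<And>i. rowlen nu i \<le> rowlen mu i" and size: "ysize mu = ysize nu + 1"
    using assms(2) by (auto simp: yprec_def cells_subset_iff)
  let ?N = "length mu"
  have "length nu \<le> ?N"
    using le[of ?N] young_rowlen_pos_iff[OF nu, of ?N] by (simp add: rowlen_beyond)
  then have "(\<Sum>i<?N. rowlen mu i - rowlen nu i) = 1"
    using size ysize_eq_sum_rowlen[of mu ?N] ysize_eq_sum_rowlen[of nu ?N] le
    by (simp add: sum_subtractf_nat)
  then obtain j where "j \<in> {..<?N}" and diff_j: "rowlen mu j - rowlen nu j = 1"
    and diff_other: "\<forall>i\<in>{..<?N}. j \<noteq> i \<longrightarrow> rowlen mu i - rowlen nu i = 0"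
    unfolding sum_eq_1_iff[OF finite_lessThan] by blast
  have rowlen_nu: "rowlen nu i = rowlen mu i - (if i = j then 1 else 0)" for i
    using diff_j diff_other le[of i] rowlen_beyond[of mu i] by (cases "i < ?N") auto
  have rem: "removable mu j"
    using rowlen_nu[of j] rowlen_nu[of "Suc j"] young_rowlen_Suc_le[OF nu, of j] diff_j
    by (auto simp: removable_def)
  have "nu = remove_box mu j"
    by (rule young_eqI[OF nu young_remove_box[OF assms(1) rem]])
       (simp add: rowlen_nu rowlen_remove_box[OF assms(1) rem])
  with rem show thesis by (rule that)
qed

lemma yprec_eq_image_remove_box:
  assumes "young mu"
  shows "{nu. yprec nu mu} = remove_box mu ` removable_rows mu"
proof (intro equalityI subsetI)
  fix nu assume "nu \<in> {nu. yprec nu mu}"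
  then obtain j where "removable mu j" "nu = remove_box mu j"
    using yprec_imp_remove_box[OF assms] by blast
  then show "nu \<in> remove_box mu ` removable_rows mu" by (simp add: removable_rows_def)
qed (auto simp: removable_rows_def yprec_remove_box assms)

lemma inj_on_remove_box: "young mu \<Longrightarrow> inj_on (remove_box mu) (removable_rows mu)"
  by (rule inj_onI, drule arg_cong[where f = "\<lambda>nu. rowlen nu _"])
     (auto simp: removable_rows_def rowlen_remove_box removable_def split: if_splits)

lemma addable_removable_swap:
  assumes "young mu" "j \<noteq> k"
  shows "addable mu k \<and> removable (add_box mu k) j \<longleftrightarrow> removable mu j \<and> addable (remove_box mu j) k"
proof
  assume A: "addable mu k \<and> removable (add_box mu k) j"
  have k: "k \<le> length mu" using addable_le_length A by blast
  have R: "rowlen mu (Suc j) + (if Suc j = k then 1 else 0) < rowlen mu j"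
    using A assms(2) by (simp add: removable_def rowlen_add_box[OF k])
  have r: "removable mu j" using R by (simp add: removable_def)
  have "addable (remove_box mu j) k"
    using A R assms(2) unfolding addable_def rowlen_remove_box[OF assms(1) r] by (auto split: if_splits)
  then show "removable mu j \<and> addable (remove_box mu j) k" using r by blast
next
  assume A: "removable mu j \<and> addable (remove_box mu j) k"
  then have r: "removable mu j" by blast
  have k: "k \<le> length mu"
    using addable_le_length[of "remove_box mu j" k] A length_remove_box[of mu j] by simp
  have Ad: "k = 0 \<or> rowlen mu k < rowlen mu (k - 1) - (if k - 1 = j then 1 else 0)"
    using A assms(2) unfolding addable_def rowlen_remove_box[OF assms(1) r] by (auto split: if_splits)
  then have "addable mu k" by (auto simp: addable_def)
  moreover have "removable (add_box mu k) j"
    using Ad r assms(2) unfolding removable_def rowlen_add_box[OF k] by (auto split: if_splits)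
  ultimately show "addable mu k \<and> removable (add_box mu k) j" by blast
qed

lemma remove_add_box_swap:
  assumes "young mu" "j \<noteq> k" "addable mu k" "removable (add_box mu k) j"
  shows "remove_box (add_box mu k) j = add_box (remove_box mu j) k"
proof -
  have r: "removable mu j" and a: "addable (remove_box mu j) k"
    using addable_removable_swap[OF assms(1,2)] assms(3,4) by auto
  have k: "k \<le> length mu" and k': "k \<le> length (remove_box mu j)"
    using addable_le_length assms(3) a by auto
  show ?thesis
    by (rule young_eqI[OF young_remove_box[OF young_add_box[OF assms(1,3)] assms(4)]
          young_add_box[OF young_remove_box[OF assms(1) r] a]])
       (use assms(2) in \<open>simp add: rowlen_remove_box[OF young_add_box[OF assms(1,3)] assms(4)]
          rowlen_add_box[OF k] rowlen_add_box[OF k'] rowlen_remove_box[OF assms(1) r]\<close>)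
qed

section \<open>Jacobi-Trudi determinants and the Pieri rule\<close>

lemma detn_eq_det: "detn n M = det (mat n n (\<lambda>(i, j). M i j))"
  unfolding detn_def det_def by (simp add: atLeast0LessThan)

lemma detn_cong: "(\<And>i j. i < n \<Longrightarrow> j < n \<Longrightarrow> M i j = M' i j) \<Longrightarrow> detn n M = detn n M'"
  unfolding detn_eq_det by (rule arg_cong[of _ _ det]) (auto intro!: eq_matI)

lemma detn_identical_rows:
  assumes "i \<noteq> k" "i < n" "k < n" "\<And>j. j < n \<Longrightarrow> M i j = M k j"
  shows "detn n M = 0"
  unfolding detn_eq_det
  by (rule det_identical_rows[of _ n i k]) (use assms in \<open>auto intro!: eq_vecI simp: row_def\<close>)

lemma detn_identical_cols:
  assumes "i \<noteq> k" "i < n" "k < n" "\<And>j. j < n \<Longrightarrow> M j i = M j k"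
  shows "detn n M = 0"
  unfolding detn_eq_det
  by (rule det_identical_columns[of _ n i k]) (use assms in \<open>auto intro!: eq_vecI simp: col_def\<close>)

lemma detn_Suc_last_row_zero:
  assumes "\<And>j. j < n \<Longrightarrow> M n j = 0"
  shows "detn (Suc n) M = M n n * detn n M"
proof -
  let ?A = "mat (Suc n) (Suc n) (\<lambda>(i, j). M i j)"
  have "det ?A = (\<Sum>j<Suc n. ?A $$ (n, j) * cofactor ?A n j)"
    by (rule laplace_expansion_row) auto
  also have "\<dots> = ?A $$ (n, n) * cofactor ?A n n"
    using assms by (simp add: sum.lessThan_Suc)
  also have "cofactor ?A n n = det (mat n n (\<lambda>(i, j). M i j))"
    unfolding cofactor_def mat_delete_def by (simp, rule arg_cong[of _ _ det], rule eq_matI, auto)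
  finally show ?thesis by (simp add: detn_eq_det)
qed

text \<open>Both sides expand to \<open>\<Sum>\<sigma>. sign \<sigma> * \<Sum>i. M' i (\<sigma> i) * (\<Prod>i'\<noteq>i. M i' (\<sigma> i'))\<close>.\<close>

lemma sum_detn_replace_row_eq_sum_detn_replace_col:
  "(\<Sum>k<n. detn n (\<lambda>i j. if i = k then M' i j else M i j))
     = (\<Sum>l<n. detn n (\<lambda>i j. if j = l then M' i j else M i j))"
proof -
  let ?P = "{\<sigma>. \<sigma> permutes {0..<n}}"
  let ?F = "\<lambda>\<sigma> l. of_int (sign \<sigma>) * (\<Prod>i<n. if \<sigma> i = l then M' i (\<sigma> i) else M i (\<sigma> i))"
  have rows: "detn n (\<lambda>i j. if i = k then M' i j else M i j) = (\<Sum>\<sigma>\<in>?P. ?F \<sigma> (\<sigma> k))" for k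
    unfolding detn_def
  proof (rule sum.cong[OF refl])
    fix \<sigma> assume "\<sigma> \<in> ?P"
    then have "\<sigma> i = \<sigma> k \<longleftrightarrow> i = k" for i by (auto dest: permutes_inj injD)
    then show "of_int (sign \<sigma>) * (\<Prod>i<n. if i = k then M' i (\<sigma> i) else M i (\<sigma> i)) = ?F \<sigma> (\<sigma> k)"
      by simp
  qed
  have reindex: "(\<Sum>k<n. ?F \<sigma> (\<sigma> k)) = (\<Sum>l<n. ?F \<sigma> l)" if "\<sigma> \<in> ?P" for \<sigma>
  proof (rule sum.reindex_bij_betw)
    have "\<sigma> permutes {..<n}" using that by (simp add: atLeast0LessThan)
    then show "bij_betw \<sigma> {..<n} {..<n}" by (rule permutes_imp_bij)
  qed
  have "(\<Sum>k<n. detn n (\<lambda>i j. if i = k then M' i j else M i j)) = (\<Sum>\<sigma>\<in>?P. \<Sum>k<n. ?F \<sigma> (\<sigma> k))"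
    unfolding rows by (rule sum.swap)
  also have "\<dots> = (\<Sum>\<sigma>\<in>?P. \<Sum>l<n. ?F \<sigma> l)"
    using reindex by (rule sum.cong[OF refl])
  also have "\<dots> = (\<Sum>l<n. \<Sum>\<sigma>\<in>?P. ?F \<sigma> l)"
    by (rule sum.swap)
  finally show ?thesis by (simp add: detn_def)
qed

definition jacobi_trudi :: "(nat \<Rightarrow> nat) \<Rightarrow> nat \<Rightarrow> nat \<Rightarrow> sym" where
  "jacobi_trudi f i j = hsym_int (int (f i) - int i + int j)"

lemma schur_eq_detn_jacobi_trudi: "schur mu = detn (length mu) (jacobi_trudi (rowlen mu))"
  unfolding schur_def jacobi_trudi_def by (rule detn_cong) (simp add: rowlen_def)

text \<open>Padding \<open>mu\<close> with zero rows adds a unitriangular block to the Jacobi-Trudi matrix.\<close>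

lemma detn_jacobi_trudi_pad:
  assumes "length mu \<le> N"
  shows "detn N (jacobi_trudi (rowlen mu)) = schur mu"
proof -
  have "detn (length mu + d) (jacobi_trudi (rowlen mu)) = schur mu" for d
  proof (induction d)
    case (Suc d)
    let ?N = "length mu + d"
    have "detn (Suc ?N) (jacobi_trudi (rowlen mu))
        = jacobi_trudi (rowlen mu) ?N ?N * detn ?N (jacobi_trudi (rowlen mu))"
      by (rule detn_Suc_last_row_zero) (simp add: jacobi_trudi_def rowlen_beyond hsym_int_def)
    moreover have "jacobi_trudi (rowlen mu) ?N ?N = 1"
      by (simp add: jacobi_trudi_def rowlen_beyond hsym_int_def)
    ultimately show ?case using Suc by simp
  qed (simp add: schur_eq_detn_jacobi_trudi)
  from this[of "N - length mu"] show ?thesis using assms by simp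
qed

text \<open>The Pieri rule for \<open>p_1 = h_1\<close> is obtained by evaluating
  \<open>\<Sum>k. det(JT with row k shifted) = \<Sum>l. det(JT with column l shifted)\<close> in two ways, where shifting
  means replacing \<open>h_(a)\<close> by \<open>h_(a+1)\<close>.\<close>

lemma sum_detn_shift_col_jacobi_trudi:
  "(\<Sum>l<Suc (length mu). detn (Suc (length mu))
      (\<lambda>i j. if j = l then jacobi_trudi (rowlen mu) i (Suc j) else jacobi_trudi (rowlen mu) i j))
    = psum 1 * schur mu"
proof -
  let ?n = "length mu"
  let ?JT = "jacobi_trudi (rowlen mu)"
  have "detn (Suc ?n) (\<lambda>i j. if j = l then ?JT i (Suc j) else ?JT i j) = 0" if "l < ?n" for l
    by (rule detn_identical_cols[of l "Suc l"]) (use that in \<open>auto simp: jacobi_trudi_def\<close>)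
  moreover have "detn (Suc ?n) (\<lambda>i j. if j = ?n then ?JT i (Suc j) else ?JT i j) = psum 1 * schur mu"
  proof -
    have "detn (Suc ?n) (\<lambda>i j. if j = ?n then ?JT i (Suc j) else ?JT i j)
        = ?JT ?n (Suc ?n) * detn ?n (\<lambda>i j. if j = ?n then ?JT i (Suc j) else ?JT i j)"
      by (subst detn_Suc_last_row_zero) (simp_all add: jacobi_trudi_def rowlen_beyond hsym_int_def)
    also have "detn ?n (\<lambda>i j. if j = ?n then ?JT i (Suc j) else ?JT i j) = schur mu"
      by (simp add: schur_eq_detn_jacobi_trudi cong: detn_cong)
    finally show ?thesis
      using hsym_1 by (simp add: jacobi_trudi_def rowlen_beyond hsym_int_def)
  qed
  ultimately show ?thesis by (simp add: sum.lessThan_Suc)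
qed

lemma detn_shift_row_jacobi_trudi:
  assumes "young mu" "k < Suc (length mu)"
  shows "detn (Suc (length mu))
      (\<lambda>i j. if i = k then jacobi_trudi (rowlen mu) i (Suc j) else jacobi_trudi (rowlen mu) i j)
    = (if addable mu k then schur (add_box mu k) else 0)"
proof (cases "addable mu k")
  case True
  have "detn (Suc (length mu))
      (\<lambda>i j. if i = k then jacobi_trudi (rowlen mu) i (Suc j) else jacobi_trudi (rowlen mu) i j)
      = detn (Suc (length mu)) (jacobi_trudi (rowlen (add_box mu k)))"
    by (rule detn_cong) (use assms in \<open>auto simp: jacobi_trudi_def rowlen_add_box algebra_simps\<close>)
  also have "\<dots> = schur (add_box mu k)"
    by (rule detn_jacobi_trudi_pad) (use assms in \<open>simp add: length_add_box\<close>)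
  finally show ?thesis using True by simp
next
  case False
  then have "k \<noteq> 0" and "rowlen mu (k - 1) \<le> rowlen mu k" by (auto simp: addable_def)
  moreover have "rowlen mu k \<le> rowlen mu (k - 1)" using young_rowlen_antimono[OF assms(1)] by simp
  ultimately have "rowlen mu (k - 1) = rowlen mu k" and "int (k - 1) = int k - 1" by auto
  then have "detn (Suc (length mu))
      (\<lambda>i j. if i = k then jacobi_trudi (rowlen mu) i (Suc j) else jacobi_trudi (rowlen mu) i j) = 0"
    by (intro detn_identical_rows[of "k - 1" k]) (use assms(2) \<open>k \<noteq> 0\<close> in \<open>auto simp: jacobi_trudi_def algebra_simps\<close>)
  then show ?thesis using False by simp
qed

theorem pieri_psum1:
  assumes "young mu"
  shows "psum 1 * schur mu = (\<Sum>k\<in>addable_rows mu. schur (add_box mu k))"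
proof -
  let ?n = "length mu"
  let ?JT = "jacobi_trudi (rowlen mu)"
  have "psum 1 * schur mu
      = (\<Sum>k<Suc ?n. detn (Suc ?n) (\<lambda>i j. if i = k then ?JT i (Suc j) else ?JT i j))"
    by (simp only: sum_detn_replace_row_eq_sum_detn_replace_col sum_detn_shift_col_jacobi_trudi)
  also have "\<dots> = (\<Sum>k<Suc ?n. if addable mu k then schur (add_box mu k) else 0)"
    by (rule sum.cong) (auto simp: detn_shift_row_jacobi_trudi[OF assms])
  also have "\<dots> = (\<Sum>k\<in>{k\<in>{..<Suc ?n}. addable mu k}. schur (add_box mu k))"
    by (rule sum.inter_filter[symmetric]) simp
  also have "{k\<in>{..<Suc ?n}. addable mu k} = addable_rows mu"
    by (auto simp: addable_rows_def dest: addable_le_length)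
  finally show ?thesis .
qed

section \<open>The operator \<open>B\<close> commutes with \<open>p_1\<close>\<close>

definition box_weight :: "complex \<Rightarrow> complex \<Rightarrow> int \<Rightarrow> real" where
  "box_weight z z' c = Re ((z + of_int c) * (z' + of_int c))"

text \<open>The weight \<open>(z)_\<box> (z')_\<box>\<close> of the last box in row \<open>j\<close> (0-based) of \<open>mu\<close>.\<close>

definition corner_weight :: "complex \<Rightarrow> complex \<Rightarrow> nat list \<Rightarrow> nat \<Rightarrow> real" where
  "corner_weight z z' mu j = box_weight z z' (int (rowlen mu j) - int (Suc j))"

lemma coef_remove_box:
  assumes "young mu" "removable mu j"
  shows "coef z z' mu (remove_box mu j) = corner_weight z z' mu j"
proof -
  have "0 < rowlen mu j" using assms(2) by (simp add: removable_def)
  then have "cells mu - cells (remove_box mu j) = {(Suc j, rowlen mu j)}"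
    by (auto simp: cells_rowlen rowlen_remove_box[OF assms] split: if_splits)
  then show ?thesis by (simp add: coef_def poch_def corner_weight_def box_weight_def)
qed

lemma Bformula_eq_sum_removable_rows:
  assumes "young mu"
  shows "Bformula z z' q mu
    = cst (- real (ysize mu) * (real (ysize mu) - 1 + Re (z * z'))) * schur mu
      + q * (\<Sum>j\<in>removable_rows mu. cst (corner_weight z z' mu j) * schur (remove_box mu j))"
  unfolding Bformula_def yprec_eq_image_remove_box[OF assms] sum.reindex[OF inj_on_remove_box[OF assms]]
  using coef_remove_box[OF assms] by (simp add: removable_rows_def)

lemma corner_weight_add_box:
  assumes "addable mu k"
  shows "corner_weight z z' (add_box mu k) j
    = (if j = k then box_weight z z' (int (rowlen mu k) - int k) else corner_weight z z' mu j)"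
  using addable_le_length[OF assms] by (simp add: corner_weight_def rowlen_add_box)

text \<open>Row \<open>j + 1\<close> has an addable box exactly when row \<open>j\<close> has a removable one; when neither does,
  the two would-be boxes have the same content, so the sums telescope.\<close>

lemma sum_addable_rows_minus_sum_removable_rows:
  fixes w :: "int \<Rightarrow> 'a::ab_group_add"
  assumes "young mu"
  shows "(\<Sum>k\<in>addable_rows mu. w (int (rowlen mu k) - int k))
       - (\<Sum>j\<in>removable_rows mu. w (int (rowlen mu j) - int (Suc j)))
     = w (- int (length mu))
       + (\<Sum>j<length mu. w (int (rowlen mu j) - int j) - w (int (rowlen mu j) - int j - 1))"
proof -
  let ?L = "length mu"
  define G where "G k = w (int (rowlen mu k) - int k)" for k
  define R where "R j = w (int (rowlen mu j) - int (Suc j))" for j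
  have "addable_rows mu = {k\<in>{..<Suc ?L}. addable mu k}"
    by (auto simp: addable_rows_def dest: addable_le_length)
  then have "(\<Sum>k\<in>addable_rows mu. G k) = (\<Sum>k<Suc ?L. if addable mu k then G k else 0)"
    by (simp only: sum.inter_filter finite_lessThan)
  also have "\<dots> = G 0 + (\<Sum>j<?L. if addable mu (Suc j) then G (Suc j) else 0)"
    by (subst sum.lessThan_Suc_shift) (simp add: addable_def)
  finally have add: "(\<Sum>k\<in>addable_rows mu. G k)
      = G 0 + (\<Sum>j<?L. if addable mu (Suc j) then G (Suc j) else 0)" .
  have "removable_rows mu = {j\<in>{..<?L}. removable mu j}"
    by (auto simp: removable_rows_def dest: removable_less_length)
  then have rem: "(\<Sum>j\<in>removable_rows mu. R j) = (\<Sum>j<?L. if removable mu j then R j else 0)"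
    by (simp only: sum.inter_filter finite_lessThan)
  have pair: "(if addable mu (Suc j) then G (Suc j) else 0) - (if removable mu j then R j else 0)
      = G (Suc j) - R j" for j
  proof (cases "removable mu j")
    case False
    then have "rowlen mu (Suc j) = rowlen mu j"
      using young_rowlen_Suc_le[OF assms, of j] by (simp add: removable_def)
    with False show ?thesis by (simp add: G_def R_def addable_def removable_def)
  qed (simp add: addable_def removable_def)
  have "(\<Sum>k\<in>addable_rows mu. G k) - (\<Sum>j\<in>removable_rows mu. R j) = G 0 + (\<Sum>j<?L. G (Suc j) - R j)"
    unfolding add rem by (simp add: sum_subtractf[symmetric] pair)
  also have "\<dots> = G ?L + (\<Sum>j<?L. G j - R j)"
  proof -
    have "G 0 + (\<Sum>j<?L. G (Suc j)) = G ?L + (\<Sum>j<?L. G j)"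
      by (metis sum.lessThan_Suc_shift sum.lessThan_Suc add.commute)
    then show ?thesis by (simp add: sum_subtractf algebra_simps)
  qed
  finally show ?thesis
    by (simp add: G_def R_def rowlen_beyond algebra_simps)
qed

lemma corner_weight_identity:
  assumes "young mu"
  shows "(\<Sum>k\<in>addable_rows mu. corner_weight z z' (add_box mu k) k)
       - (\<Sum>j\<in>removable_rows mu. corner_weight z z' mu j)
     = Re (z * z') + 2 * real (ysize mu)"
proof -
  let ?L = "length mu"
  define a where "a = Re (z * z')"
  define b where "b = Re (z + z')"
  have w: "box_weight z z' c = a + of_int c * b + (of_int c)^2" for c
    by (simp add: box_weight_def a_def b_def algebra_simps power2_eq_square)
  have step: "box_weight z z' c - box_weight z z' (c - 1) = b + 2 * of_int c - 1" for c
    by (simp add: w power2_eq_square algebra_simps)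
  have "(\<Sum>k\<in>addable_rows mu. corner_weight z z' (add_box mu k) k)
      = (\<Sum>k\<in>addable_rows mu. box_weight z z' (int (rowlen mu k) - int k))"
    by (rule sum.cong) (simp_all add: addable_rows_def corner_weight_add_box)
  then have "(\<Sum>k\<in>addable_rows mu. corner_weight z z' (add_box mu k) k)
       - (\<Sum>j\<in>removable_rows mu. corner_weight z z' mu j)
     = box_weight z z' (- int ?L) + (\<Sum>j<?L. b + 2 * (real (rowlen mu j) - real j) - 1)"
    using sum_addable_rows_minus_sum_removable_rows[OF assms, of "box_weight z z'"]
    by (simp add: corner_weight_def step)
  also have "\<dots> = a - b * ?L + (real ?L)^2 + b * ?L + 2 * (\<Sum>j<?L. real (rowlen mu j))
      - 2 * (\<Sum>j<?L. real j) - ?L"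
    by (simp add: w sum.distrib sum_subtractf sum_distrib_left algebra_simps)
  also have "2 * (\<Sum>j<n. real j) = real n * (real n - 1)" for n
    by (induction n) (auto simp: algebra_simps)
  also have "(\<Sum>j<?L. real (rowlen mu j)) = real (ysize mu)"
    using ysize_eq_sum_rowlen[of mu ?L] by simp
  finally show ?thesis by (simp add: a_def power2_eq_square algebra_simps)
qed

definition add_remove_sum :: "complex \<Rightarrow> complex \<Rightarrow> (nat list \<Rightarrow> sym) \<Rightarrow> nat list \<Rightarrow> sym" where
  "add_remove_sum z z' F mu = (\<Sum>k\<in>addable_rows mu. \<Sum>j\<in>removable_rows (add_box mu k).
     cst (corner_weight z z' (add_box mu k) j) * F (remove_box (add_box mu k) j))"

definition remove_add_sum :: "complex \<Rightarrow> complex \<Rightarrow> (nat list \<Rightarrow> sym) \<Rightarrow> nat list \<Rightarrow> sym" where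
  "remove_add_sum z z' F mu = (\<Sum>j\<in>removable_rows mu. cst (corner_weight z z' mu j) *
     (\<Sum>k\<in>addable_rows (remove_box mu j). F (add_box (remove_box mu j) k)))"

text \<open>A pair \<open>(k, j)\<close> moves a box of \<open>mu\<close> from row \<open>j\<close> to another row \<open>k\<close>.\<close>

definition box_moves :: "nat list \<Rightarrow> (nat \<times> nat) set" where
  "box_moves mu = Sigma (addable_rows mu) (\<lambda>k. removable_rows (add_box mu k) - {k})"

lemma mem_box_moves_iff:
  "young mu \<Longrightarrow> (k, j) \<in> box_moves mu \<longleftrightarrow> removable mu j \<and> addable (remove_box mu j) k \<and> k \<noteq> j"
  using addable_removable_swap[of mu j k]
  by (auto simp: box_moves_def addable_rows_def removable_rows_def)

lemma add_remove_sum_split: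
  assumes "young mu"
  shows "add_remove_sum z z' F mu
    = (\<Sum>k\<in>addable_rows mu. cst (corner_weight z z' (add_box mu k) k) * F mu)
      + (\<Sum>(k, j)\<in>box_moves mu. cst (corner_weight z z' (add_box mu k) j) * F (remove_box (add_box mu k) j))"
proof -
  have "(\<Sum>j\<in>removable_rows (add_box mu k). cst (corner_weight z z' (add_box mu k) j) * F (remove_box (add_box mu k) j))
      = cst (corner_weight z z' (add_box mu k) k) * F mu
        + (\<Sum>j\<in>removable_rows (add_box mu k) - {k}.
            cst (corner_weight z z' (add_box mu k) j) * F (remove_box (add_box mu k) j))"
    if "k \<in> addable_rows mu" for k
  proof -
    have add: "addable mu k" using that by (simp add: addable_rows_def)
    then have "k \<in> removable_rows (add_box mu k)"
      using remove_add_box(1)[OF assms] by (simp add: removable_rows_def)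
    then show ?thesis
      using remove_add_box(2)[OF assms add] by (simp add: sum.remove[OF finite_removable_rows])
  qed
  then show ?thesis
    by (simp add: add_remove_sum_def sum.distrib box_moves_def sum.Sigma finite_addable_rows
        finite_removable_rows)
qed

lemma remove_add_sum_split:
  assumes "young mu"
  shows "remove_add_sum z z' F mu
    = (\<Sum>j\<in>removable_rows mu. cst (corner_weight z z' mu j) * F mu)
      + (\<Sum>(k, j)\<in>box_moves mu. cst (corner_weight z z' (add_box mu k) j) * F (remove_box (add_box mu k) j))"
proof -
  let ?T = "\<lambda>k j. cst (corner_weight z z' (add_box mu k) j) * F (remove_box (add_box mu k) j)"
  have "cst (corner_weight z z' mu j) * (\<Sum>k\<in>addable_rows (remove_box mu j). F (add_box (remove_box mu j) k))
      = cst (corner_weight z z' mu j) * F mu + (\<Sum>k\<in>addable_rows (remove_box mu j) - {j}. ?T k j)"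
    if "j \<in> removable_rows mu" for j
  proof -
    have rem: "removable mu j" using that by (simp add: removable_rows_def)
    then have "j \<in> addable_rows (remove_box mu j)"
      using add_remove_box(1)[OF assms] by (simp add: addable_rows_def)
    then have "cst (corner_weight z z' mu j) * (\<Sum>k\<in>addable_rows (remove_box mu j). F (add_box (remove_box mu j) k))
        = cst (corner_weight z z' mu j) * F mu + (\<Sum>k\<in>addable_rows (remove_box mu j) - {j}.
            cst (corner_weight z z' mu j) * F (add_box (remove_box mu j) k))"
      using add_remove_box(2)[OF assms rem]
      by (simp add: sum.remove[OF finite_addable_rows] sum_distrib_left distrib_left)
    also have "(\<Sum>k\<in>addable_rows (remove_box mu j) - {j}.
        cst (corner_weight z z' mu j) * F (add_box (remove_box mu j) k))
      = (\<Sum>k\<in>addable_rows (remove_box mu j) - {j}. ?T k j)"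
    proof (rule sum.cong[OF refl])
      fix k assume "k \<in> addable_rows (remove_box mu j) - {j}"
      then have "(k, j) \<in> box_moves mu" using rem by (simp add: mem_box_moves_iff[OF assms] addable_rows_def)
      then have "addable mu k" "removable (add_box mu k) j" "j \<noteq> k"
        by (auto simp: box_moves_def addable_rows_def removable_rows_def)
      then show "cst (corner_weight z z' mu j) * F (add_box (remove_box mu j) k) = ?T k j"
        by (simp add: corner_weight_add_box remove_add_box_swap[OF assms])
    qed
    finally show ?thesis .
  qed
  then have "remove_add_sum z z' F mu
      = (\<Sum>j\<in>removable_rows mu. cst (corner_weight z z' mu j) * F mu)
        + (\<Sum>(j, k)\<in>Sigma (removable_rows mu) (\<lambda>j. addable_rows (remove_box mu j) - {j}). ?T k j)"
    by (simp add: remove_add_sum_def sum.distrib sum.Sigma finite_addable_rows finite_removable_rows)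
  also have "Sigma (removable_rows mu) (\<lambda>j. addable_rows (remove_box mu j) - {j}) = prod.swap ` box_moves mu"
    by (auto simp: mem_box_moves_iff[OF assms] removable_rows_def addable_rows_def)
  finally show ?thesis
    by (simp add: sum.reindex case_prod_unfold)
qed

text \<open>Both orders of adding and removing a box reach the same diagrams other than \<open>mu\<close>, with the same
  weights; the terms returning to \<open>mu\<close> are governed by the content identity.\<close>

lemma add_remove_sum_minus_remove_add_sum:
  assumes "young mu"
  shows "add_remove_sum z z' F mu - remove_add_sum z z' F mu = cst (Re (z * z') + 2 * real (ysize mu)) * F mu"
proof -
  have "cst (Re (z * z') + 2 * real (ysize mu)) * F mu
      = (\<Sum>k\<in>addable_rows mu. cst (corner_weight z z' (add_box mu k) k) * F mu)
        - (\<Sum>j\<in>removable_rows mu. cst (corner_weight z z' mu j) * F mu)"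
    unfolding corner_weight_identity[OF assms, symmetric]
    by (simp add: cst_diff cst_sum sum_distrib_right left_diff_distrib)
  then show ?thesis
    by (simp add: add_remove_sum_split[OF assms] remove_add_sum_split[OF assms])
qed

lemma B_psum1_mult_schur:
  assumes lin: "real_linear B"
    and B_schur: "\<And>mu. young mu \<Longrightarrow> B (schur mu) = Bformula z z' (psum 1) mu"
    and mu: "young mu"
  shows "B (psum 1 * schur mu) = psum 1 * B (schur mu)"
proof -
  let ?p = "psum 1"
  define c where "c m = - real m * (real m - 1 + Re (z * z'))" for m
  let ?AR = "add_remove_sum z z' schur mu" and ?RA = "remove_add_sum z z' schur mu"
  have "B (?p * schur mu) = (\<Sum>k\<in>addable_rows mu. B (schur (add_box mu k)))"
    unfolding pieri_psum1[OF mu] by (rule real_linear_sum[OF lin])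
  also have "\<dots> = (\<Sum>k\<in>addable_rows mu. cst (c (Suc (ysize mu))) * schur (add_box mu k)
      + ?p * (\<Sum>j\<in>removable_rows (add_box mu k).
          cst (corner_weight z z' (add_box mu k) j) * schur (remove_box (add_box mu k) j)))"
  proof (rule sum.cong[OF refl])
    fix k assume "k \<in> addable_rows mu"
    then have "addable mu k" by (simp add: addable_rows_def)
    then show "B (schur (add_box mu k)) = cst (c (Suc (ysize mu))) * schur (add_box mu k)
      + ?p * (\<Sum>j\<in>removable_rows (add_box mu k).
          cst (corner_weight z z' (add_box mu k) j) * schur (remove_box (add_box mu k) j))"
      by (simp add: B_schur young_add_box[OF mu] Bformula_eq_sum_removable_rows ysize_add_box[OF mu] c_def)
  qed
  also have "\<dots> = cst (c (Suc (ysize mu))) * (?p * schur mu) + ?p * ?AR"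
    by (simp only: add_remove_sum_def pieri_psum1[OF mu] sum.distrib sum_distrib_left)
  finally have left: "B (?p * schur mu) = cst (c (Suc (ysize mu))) * (?p * schur mu) + ?p * ?AR" .
  have "?p * B (schur mu) = cst (c (ysize mu)) * (?p * schur mu)
      + ?p * (?p * (\<Sum>j\<in>removable_rows mu. cst (corner_weight z z' mu j) * schur (remove_box mu j)))"
    by (simp add: B_schur[OF mu] Bformula_eq_sum_removable_rows[OF mu] c_def algebra_simps)
  also have "?p * (\<Sum>j\<in>removable_rows mu. cst (corner_weight z z' mu j) * schur (remove_box mu j)) = ?RA"
    unfolding remove_add_sum_def sum_distrib_left[of "psum 1"]
  proof (rule sum.cong[OF refl])
    fix j assume "j \<in> removable_rows mu"
    then have "young (remove_box mu j)" by (simp add: removable_rows_def young_remove_box[OF mu])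
    then show "?p * (cst (corner_weight z z' mu j) * schur (remove_box mu j))
      = cst (corner_weight z z' mu j) * (\<Sum>k\<in>addable_rows (remove_box mu j). schur (add_box (remove_box mu j) k))"
      by (metis pieri_psum1 mult.left_commute)
  qed
  finally have right: "?p * B (schur mu) = cst (c (ysize mu)) * (?p * schur mu) + ?p * ?RA" .
  have "B (?p * schur mu) - ?p * B (schur mu)
      = (cst (c (Suc (ysize mu))) - cst (c (ysize mu))) * (?p * schur mu) + ?p * (?AR - ?RA)"
    unfolding left right by (simp add: algebra_simps)
  also have "\<dots> = cst (c (Suc (ysize mu)) - c (ysize mu) + Re (z * z') + 2 * real (ysize mu)) * (?p * schur mu)"
    unfolding add_remove_sum_minus_remove_add_sum[OF mu] by (simp add: cst_add cst_diff algebra_simps)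
  also have "c (Suc (ysize mu)) - c (ysize mu) + Re (z * z') + 2 * real (ysize mu) = 0"
    by (simp add: c_def algebra_simps)
  finally show ?thesis by simp
qed

section \<open>The Schur functions span \<open>\<Lambda>\<close>\<close>

lemma sum_lessThan_card_le: "finite A \<Longrightarrow> (\<Sum>i<card A. i) \<le> \<Sum>A"
proof (induction "card A" arbitrary: A)
  case (Suc n A)
  let ?m = "Max A"
  have m: "?m \<in> A" and "A \<subseteq> {..?m}"
    using Suc Max_ge[OF Suc.prems] by (auto simp del: Max_in intro: Max_in)
  then have "card A \<le> Suc ?m" using card_mono[OF finite_atMost] by fastforce
  moreover have "card (A - {?m}) = n" using Suc.hyps(2) Suc.prems m by simp
  then have "(\<Sum>i<n. i) \<le> \<Sum>(A - {?m})"
    using Suc.hyps(1)[of "A - {?m}"] Suc.prems by simp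
  moreover have "\<Sum>A = ?m + \<Sum>(A - {?m})" using sum.remove[OF Suc.prems m, of id] by simp
  ultimately show ?case using Suc.hyps(2)[symmetric] by simp
qed simp

lemma sum_lessThan_le_sum_permutes:
  fixes \<sigma> :: "nat \<Rightarrow> nat"
  assumes "\<sigma> permutes S"
  shows "(\<Sum>i<c. i) \<le> (\<Sum>i<c. \<sigma> i)"
proof -
  have inj: "inj_on \<sigma> {..<c}" using permutes_inj[OF assms] by (simp add: inj_on_def inj_def)
  then show ?thesis
    using sum_lessThan_card_le[of "\<sigma> ` {..<c}"] by (simp add: sum.reindex card_image)
qed

lemma summation_by_parts_lessThan:
  fixes x d :: "nat \<Rightarrow> 'a::comm_ring"
  shows "(\<Sum>i<L. x i * d i) = (\<Sum>k<L. (x k - x (Suc k)) * (\<Sum>i<Suc k. d i)) + x L * (\<Sum>i<L. d i)"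
  by (induction L) (simp_all add: algebra_simps)

text \<open>Permuting the column shifts of the Jacobi-Trudi matrix strictly increases the sum of squares of
  the indices \<open>lam_i - i + \<sigma> i\<close>: the partial sums of \<open>\<sigma> i - i\<close> are nonnegative and \<open>lam\<close> is
  decreasing, so the cross term is nonnegative by summation by parts.\<close>

lemma sum_squares_lt_permuted:
  assumes y: "young lam" and p: "\<sigma> permutes {0..<length lam}" and ne: "\<sigma> \<noteq> id"
  shows "(\<Sum>i<length lam. (int (rowlen lam i))^2)
       < (\<Sum>i<length lam. (int (rowlen lam i) + int (\<sigma> i) - int i)^2)"
proof -
  let ?L = "length lam"
  define x where "x i = int (rowlen lam i)" for i
  define d where "d i = int (\<sigma> i) - int i" for i
  have partial_sums: "0 \<le> (\<Sum>i<c. d i)" for c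
    using sum_lessThan_le_sum_permutes[OF p, of c]
    unfolding d_def sum_subtractf by (simp flip: of_nat_sum)
  have "0 \<le> (\<Sum>k<?L. (x k - x (Suc k)) * (\<Sum>i<Suc k. d i))"
  proof (rule sum_nonneg)
    fix k
    have "0 \<le> x k - x (Suc k)" using young_rowlen_Suc_le[OF y, of k] by (simp add: x_def)
    then show "0 \<le> (x k - x (Suc k)) * (\<Sum>i<Suc k. d i)"
      using partial_sums[of "Suc k"] by (rule mult_nonneg_nonneg)
  qed
  then have cross: "0 \<le> (\<Sum>i<?L. x i * d i)"
    using summation_by_parts_lessThan[of x d ?L] by (simp add: x_def rowlen_beyond)
  obtain i where i: "i < ?L" "\<sigma> i \<noteq> i"
    using ne permutes_not_in[OF p] by (metis atLeastLessThan_iff eq_id_iff le0)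
  have "0 < (d i)^2" using i by (simp add: d_def)
  also have "\<dots> \<le> (\<Sum>i<?L. (d i)^2)" by (rule member_le_sum) (use i in auto)
  finally have "(\<Sum>i<?L. (x i)^2) < (\<Sum>i<?L. (x i)^2 + 2 * (x i * d i) + (d i)^2)"
    using cross by (simp add: sum.distrib flip: sum_distrib_left)
  also have "\<dots> = (\<Sum>i<?L. (int (rowlen lam i) + int (\<sigma> i) - int i)^2)"
    by (rule sum.cong) (simp_all add: x_def d_def power2_eq_square algebra_simps)
  finally show ?thesis by (simp add: x_def)
qed

definition sum_squares :: "nat list \<Rightarrow> nat" where
  "sum_squares v = sum_list (map (\<lambda>x. x * x) v)"

lemma sum_squares_le: "sum_squares v \<le> sum_list v * sum_list v"
  by (induction v) (auto simp: sum_squares_def algebra_simps)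

lemma sum_squares_eq_sum_rowlen: "int (sum_squares lam) = (\<Sum>i<length lam. (int (rowlen lam i))^2)"
proof -
  have "map (\<lambda>x. x * x) lam = map (\<lambda>i. rowlen lam i * rowlen lam i) [0..<length lam]"
    by (rule nth_equalityI) (auto simp: rowlen_def)
  then show ?thesis
    by (simp add: sum_squares_def sum_list_sum_nth power2_eq_square atLeast0LessThan)
qed

lemma young_sorted_parts:
  obtains lam where "young lam" "hprod lam = hprod v" "sum_list lam = sum_list v"
    "sum_squares lam = sum_squares v"
proof
  let ?v = "filter (\<lambda>x. x \<noteq> 0) v"
  let ?lam = "rev (sort ?v)"
  have m: "mset ?lam = mset ?v" by simp
  show "young ?lam" by (simp add: young_def sorted_wrt_rev)
  have "hprod ?lam = hprod ?v"
    unfolding hprod_def by (simp only: m mset_map flip: prod_mset_prod_list)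
  also have "hprod ?v = hprod v" by (induction v) (simp_all add: hprod_def)
  finally show "hprod ?lam = hprod v" .
  have "sum_list ?lam = sum_list ?v" by (simp only: m flip: sum_mset_sum_list)
  also have "sum_list ?v = sum_list v" by (induction v) simp_all
  finally show "sum_list ?lam = sum_list v" .
  have "sum_squares ?lam = sum_squares ?v"
    unfolding sum_squares_def by (simp only: m mset_map flip: sum_mset_sum_list)
  also have "sum_squares ?v = sum_squares v" by (induction v) (simp_all add: sum_squares_def)
  finally show "sum_squares ?lam = sum_squares v" .
qed

lemma jacobi_trudi_term:
  assumes y: "young lam" and p: "\<sigma> permutes {0..<length lam}" and ne: "\<sigma> \<noteq> id"
  shows "(\<Prod>i<length lam. jacobi_trudi (rowlen lam) i (\<sigma> i)) = 0
    \<or> (\<exists>u. (\<Prod>i<length lam. jacobi_trudi (rowlen lam) i (\<sigma> i)) = hprod u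
          \<and> sum_list u = sum_list lam \<and> sum_squares lam < sum_squares u)"
proof -
  let ?L = "length lam"
  define a where "a i = int (rowlen lam i) - int i + int (\<sigma> i)" for i
  have JT: "jacobi_trudi (rowlen lam) i (\<sigma> i) = hsym_int (a i)" for i
    by (simp add: jacobi_trudi_def a_def)
  show ?thesis
  proof (cases "\<exists>i<?L. a i < 0")
    case True
    then show ?thesis by (auto simp: JT hsym_int_def intro: prod_zero)
  next
    case False
    then have nonneg: "\<And>i. i < ?L \<Longrightarrow> 0 \<le> a i" by (meson not_less)
    define u where "u = map (\<lambda>i. nat (a i)) [0..<?L]"
    have "hprod u = (\<Prod>i<?L. hsym (nat (a i)))"
      by (simp add: hprod_def u_def atLeast0LessThan flip: prod.distinct_set_conv_list)
    also have "\<dots> = (\<Prod>i<?L. jacobi_trudi (rowlen lam) i (\<sigma> i))"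
      by (rule prod.cong) (auto simp: JT hsym_int_def dest: nonneg)
    finally have prod_eq: "(\<Prod>i<?L. jacobi_trudi (rowlen lam) i (\<sigma> i)) = hprod u" by simp
    have "int (sum_list u) = (\<Sum>i<?L. int (nat (a i)))"
      by (simp add: u_def interv_sum_list_conv_sum_set_nat atLeast0LessThan of_nat_sum)
    also have "\<dots> = (\<Sum>i<?L. a i)"
      by (rule sum.cong) (auto dest: nonneg)
    finally have sum_eq: "sum_list u = sum_list lam"
      using sum.reindex_bij_betw[OF permutes_imp_bij[of \<sigma> "{..<?L}"], of int] p
        ysize_eq_sum_rowlen[of lam ?L]
      by (simp add: a_def sum.distrib sum_subtractf atLeast0LessThan ysize_def flip: of_nat_sum)
    have "int (sum_squares u) = (\<Sum>i<?L. int (nat (a i)) * int (nat (a i)))"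
      by (simp add: u_def sum_squares_def interv_sum_list_conv_sum_set_nat atLeast0LessThan of_nat_sum)
    also have "\<dots> = (\<Sum>i<?L. (a i)^2)"
      by (rule sum.cong) (auto simp: power2_eq_square dest: nonneg)
    finally have "sum_squares lam < sum_squares u"
      using sum_squares_lt_permuted[OF y p ne] sum_squares_eq_sum_rowlen[of lam]
      by (simp add: a_def algebra_simps)
    with prod_eq sum_eq show ?thesis by blast
  qed
qed

lemma schur_eq_hprod_plus_sum:
  "schur lam = hprod lam + (\<Sum>\<sigma>\<in>{\<sigma>. \<sigma> permutes {0..<length lam}} - {id}.
     of_int (sign \<sigma>) * (\<Prod>i<length lam. jacobi_trudi (rowlen lam) i (\<sigma> i)))"
proof -
  have "map hsym lam = map (\<lambda>i. hsym (rowlen lam i)) [0..<length lam]"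
    by (rule nth_equalityI) (simp_all add: rowlen_def)
  then have "(\<Prod>i<length lam. jacobi_trudi (rowlen lam) i i) = hprod lam"
    by (simp add: jacobi_trudi_def hprod_def hsym_int_def atLeast0LessThan flip: prod.distinct_set_conv_list)
  then show ?thesis
    unfolding schur_eq_detn_jacobi_trudi detn_def
    by (subst sum.remove[of _ id]) (simp_all add: permutes_id finite_permutations)
qed

text \<open>Induction on \<open>|lam|\<^sup>2\<close> minus the sum of squares of the parts, a sum of squares which every
  non-identity term of the Jacobi-Trudi expansion increases.\<close>

lemma hprod_in_real_span_schur: "hprod v \<in> real_span (schur ` Collect young)"
proof -
  have "hprod v \<in> real_span (schur ` Collect young)" if "sum_list v = n" for n
    using that
  proof (induction "n * n - sum_squares v" arbitrary: v rule: less_induct)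
    case less
    obtain lam where lam: "young lam" "hprod lam = hprod v" "sum_list lam = n"
      "sum_squares lam = sum_squares v"
      using young_sorted_parts less.prems by metis
    let ?P = "{\<sigma>. \<sigma> permutes {0..<length lam}} - {id}"
    let ?t = "\<lambda>\<sigma>. of_int (sign \<sigma>) * (\<Prod>i<length lam. jacobi_trudi (rowlen lam) i (\<sigma> i))"
    have "?t \<sigma> \<in> real_span (schur ` Collect young)" if "\<sigma> \<in> ?P" for \<sigma>
    proof -
      from that consider
        "(\<Prod>i<length lam. jacobi_trudi (rowlen lam) i (\<sigma> i)) = 0"
        | u where "(\<Prod>i<length lam. jacobi_trudi (rowlen lam) i (\<sigma> i)) = hprod u"
            "sum_list u = n" "sum_squares lam < sum_squares u"
        using jacobi_trudi_term[OF lam(1)] lam(3) by blast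
      then show ?thesis
      proof cases
        case 2
        then have "n * n - sum_squares u < n * n - sum_squares v"
          using sum_squares_le[of u] lam(4) by simp
        with 2 show ?thesis using less.hyps by (simp add: real_span_of_int)
      qed (metis mult_zero_right real_span.zero)
    qed
    moreover have "schur lam \<in> real_span (schur ` Collect young)"
      using lam(1) by (intro real_span_superset) simp
    ultimately have "schur lam - (\<Sum>\<sigma>\<in>?P. ?t \<sigma>) \<in> real_span (schur ` Collect young)"
      by (intro real_span_diff real_span_sum)
    then show ?case
      using schur_eq_hprod_plus_sum[of lam] lam(2) by simp
  qed
  then show ?thesis by blast
qed

lemma real_span_schur_UNIV: "real_span (schur ` Collect young) = UNIV"
  using real_span_subset[of "range hprod" "schur ` Collect young"] hprod_in_real_span_schur
  by (auto simp: real_span_hprod_UNIV)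

theorem proposition5p5:
  fixes z z' :: complex and B :: "sym \<Rightarrow> sym"
  assumes "admissible z z'"
    and "real_linear B"
    and "\<And>mu. young mu \<Longrightarrow> B (schur mu) = Bformula z z' (psum 1) mu"
  shows "(\<forall>f. in_ideal f \<longrightarrow> in_ideal (B f))
       \<and> (\<forall>mu. young mu \<longrightarrow> in_ideal (B (schur mu) - Bformula z z' 1 mu))"
proof (intro conjI allI impI)
  note lin = assms(2)
  have commutes: "B (psum 1 * g) = psum 1 * B g" for g
  proof (rule real_linear_eq_on_span[OF real_linear_mult_left(2,1)[OF lin]])
    show "g \<in> real_span (schur ` Collect young)" by (simp add: real_span_schur_UNIV)
  next
    fix x assume "x \<in> schur ` Collect young"
    then show "B (psum 1 * x) = psum 1 * B x" using B_psum1_mult_schur[OF lin assms(3)] by blast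
  qed
  fix f assume "in_ideal f"
  then obtain g where f: "f = (psum 1 - 1) * g" by (auto simp: in_ideal_def)
  have "B f = B (psum 1 * g + cst (- 1) * g)"
    by (simp add: f cst_uminus algebra_simps)
  also have "\<dots> = psum 1 * B g + cst (- 1) * B g"
    by (simp only: real_linear_add[OF lin] real_linear_smult[OF lin] commutes)
  also have "\<dots> = (psum 1 - 1) * B g"
    by (simp add: cst_uminus algebra_simps)
  finally show "in_ideal (B f)" by (auto simp: in_ideal_def)
next
  fix mu assume "young mu"
  then have "B (schur mu) - Bformula z z' 1 mu
      = (psum 1 - 1) * (\<Sum>nu\<in>{nu. yprec nu mu}. cst (coef z z' mu nu) * schur nu)"
    by (simp add: assms(3) Bformula_def algebra_simps)
  then show "in_ideal (B (schur mu) - Bformula z z' 1 mu)" by (auto simp: in_ideal_def)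
qed

end
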